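(* Fix $x_0$, $\tau\in(0,1)$, $v\in B(0,\rho_{\max})$. There exist, for each $i\in\{2,\dots,T\}$, a finite set $\mathcal{L}_i$ of sequences of non-negative integers of length $i-1$ and finite positive constants $\beta_i^{(j_1,\dots,j_{i-1})}(x_0)$, depending on $x_0$ and $(j_1,\dots,j_{i-1})$ but not on $\epsilon$, the perturbed control $u^\epsilon$, or the observations, such that for every nominal control $u\in U$ left continuous at $\tau$, every sequence of observations $(y_1,\dots,y_T)$, every $\epsilon\in[0,\tau)$, every $i\in\{2,\dots,T\}$ and every $t\in[i-1,i]$, $$\|\Psi_i^\epsilon(t)\|_2\le\sum_{(j_1,\dots,j_{i-1})\in\mathcal{L}_i}\beta_i^{(j_1,\dots,j_{i-1})}(x_0)\prod_{m=1}^{i-1}\|y_m\|_2^{j_m}.$$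
   Context: Fix positive integers $T,m,n_x,n_y$ and $\rho_{\max}\in(0,\infty)$; $B(0,\rho_{\max})$ is the closed Euclidean ball of radius $\rho_{\max}$ in $\mathbb{R}^m$; $U$ is the set of piecewise continuous $u:[0,T]\to\mathbb{R}^m$ with $\|u(t)\|_2\le\rho_{\max}$ for all $t$. $f:\mathbb{R}^{n_x}\times\mathbb{R}^m\to\mathbb{R}^{n_x}$ is continuously differentiable and there is $K_1\in[1,\infty)$ with $\|f(x',u')-f(x'',u'')\|_2\le K_1(\|x'-x''\|_2+\|u'-u''\|_2)$ for all $x',x''$ and $u',u''\in B(0,\rho_{\max})$. $g:\mathbb{R}^{n_x}\times\mathbb{R}^{n_y}\to\mathbb{R}^{n_x}$ is continuous and differentiable in its first argument, and there are $K_2,\dots,K_5\ge0$ and positive integers $L_1,L_2$ such that for all $x,y$ both $\|g(x,y)\|_2$ and $\|\frac{\partial}{\partial x}g(x,y)\|_2$ are at most $K_2+K_3\|x\|_2^{L_1}+K_4\|y\|_2^{L_2}+K_5\|x\|_2^{L_1}\|y\|_2^{L_2}$. For a control $w\in U$ the hybrid trajectory from $x_0$ is: $x_1$ on $[0,1]$ solves $\dot x_1=f(x_1,w)$, $x_1(0)=x_0$; for $i=2,\dots,T$, $x_i$ on $[i-1,i]$ solves $\dot x_i=f(x_i,w)$ with $x_i(i-1)=g(x_{i-1}(i-1),y_{i-1})$. Perturbed control: for $\epsilon\in[0,\tau]$, $u^\epsilon(t)=v$ if $t\in(\tau-\epsilon,\tau]$ and $u^\epsilon(t)=u(t)$ otherwise;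 $x_i^\epsilon$ are the modes of the trajectory under $u^\epsilon$. For $\epsilon\in[0,\tau)$, $\Psi_1^\epsilon$ is the solution on $[\tau-\epsilon,1]$ of $\dot\Psi_1^\epsilon=\frac{\partial}{\partial x}f(x_1^\epsilon,u^\epsilon)\Psi_1^\epsilon$ with $\Psi_1^\epsilon(\tau-\epsilon)=f(x_1^\epsilon(\tau-\epsilon),v)-f(x_1^\epsilon(\tau-\epsilon),u^\epsilon(\tau-\epsilon))$, and for $i\ge2$, $\Psi_i^\epsilon$ is the solution on $[i-1,i]$ of $\dot\Psi_i^\epsilon=\frac{\partial}{\partial x}f(x_i^\epsilon,u^\epsilon)\Psi_i^\epsilon$ with $\Psi_i^\epsilon(i-1)=\frac{\partial}{\partial x}g(x_{i-1}^\epsilon(i-1),y_{i-1})\Psi_{i-1}^\epsilon(i-1)$. (These are the pieces of the right derivative $\frac{\partial_+}{\partial\epsilon}x^\epsilon(t)$.) *)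

theory Defs
  imports "HOL-Analysis.Analysis"
begin

definition pw_continuous_on :: "real \<Rightarrow> real \<Rightarrow> (real \<Rightarrow> 'a::topological_space) \<Rightarrow> bool" where
  "pw_continuous_on a b u \<longleftrightarrow>
     (\<exists>S. finite S \<and> continuous_on ({a..b} - S) u \<and>
        (\<forall>s\<in>S. (a < s \<longrightarrow> (\<exists>l. (u \<longlongrightarrow> l) (at_left s))) \<and>
                (s < b \<longrightarrow> (\<exists>l. (u \<longlongrightarrow> l) (at_right s)))))"

definition admissible :: "nat \<Rightarrow> real \<Rightarrow> (real \<Rightarrow> 'u::real_normed_vector) \<Rightarrow> bool" where
  "admissible T \<rho> u \<longleftrightarrow> pw_continuous_on 0 (real T) u \<and> (\<forall>t\<in>{0..real T}. norm (u t) \<le> \<rho>)"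

definition pert_ctrl :: "(real \<Rightarrow> 'u) \<Rightarrow> 'u \<Rightarrow> real \<Rightarrow> real \<Rightarrow> real \<Rightarrow> 'u" where
  "pert_ctrl u v \<tau> \<epsilon> = (\<lambda>t. if \<tau> - \<epsilon> < t \<and> t \<le> \<tau> then v else u t)"

text \<open>xs i is the i-th mode (on [i-1,i]) of the hybrid trajectory from x0 under control w
  and observations y; the ODEs are understood in integral (Caratheodory) form.\<close>
definition hybrid_traj ::
  "nat \<Rightarrow> ('x::real_normed_vector \<Rightarrow> 'u \<Rightarrow> 'x) \<Rightarrow> ('x \<Rightarrow> 'y \<Rightarrow> 'x) \<Rightarrow> 'x \<Rightarrow> (nat \<Rightarrow> 'y)
    \<Rightarrow> (real \<Rightarrow> 'u) \<Rightarrow> (nat \<Rightarrow> real \<Rightarrow> 'x) \<Rightarrow> bool" where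
  "hybrid_traj T f g x0 y w xs \<longleftrightarrow>
     (\<forall>i\<in>{1..T}. \<forall>t\<in>{real i - 1..real i}.
        ((\<lambda>s. f (xs i s) (w s)) has_integral
           (xs i t - (if i = 1 then x0 else g (xs (i - 1) (real i - 1)) (y (i - 1)))))
        {real i - 1..t})"

text \<open>The variational pieces Psi_i^eps for the control w = u^eps along the trajectory xs.
  fx x u is the partial derivative of f in x, gx x y that of g in x.\<close>
definition psi_sys ::
  "nat \<Rightarrow> ('x::real_normed_vector \<Rightarrow> 'u \<Rightarrow> 'x) \<Rightarrow> ('x \<Rightarrow> 'u \<Rightarrow> 'x \<Rightarrow>\<^sub>L 'x) \<Rightarrow> ('x \<Rightarrow> 'y \<Rightarrow> 'x \<Rightarrow>\<^sub>L 'x)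
    \<Rightarrow> (nat \<Rightarrow> 'y) \<Rightarrow> 'u \<Rightarrow> real \<Rightarrow> real \<Rightarrow> (real \<Rightarrow> 'u) \<Rightarrow> (nat \<Rightarrow> real \<Rightarrow> 'x)
    \<Rightarrow> (nat \<Rightarrow> real \<Rightarrow> 'x) \<Rightarrow> bool" where
  "psi_sys T f fx gx y v \<tau> \<epsilon> w xs Ps \<longleftrightarrow>
     (\<forall>t\<in>{\<tau> - \<epsilon>..1}.
        ((\<lambda>s. fx (xs 1 s) (w s) (Ps 1 s)) has_integral
           (Ps 1 t - (f (xs 1 (\<tau> - \<epsilon>)) v - f (xs 1 (\<tau> - \<epsilon>)) (w (\<tau> - \<epsilon>)))))
        {\<tau> - \<epsilon>..t}) \<and>
     (\<forall>i\<in>{2..T}. \<forall>t\<in>{real i - 1..real i}.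
        ((\<lambda>s. fx (xs i s) (w s) (Ps i s)) has_integral
           (Ps i t - gx (xs (i - 1) (real i - 1)) (y (i - 1)) (Ps (i - 1) (real i - 1))))
        {real i - 1..t})"

end

theory Submission
  imports Defs
begin

text \<open>Within a mode the state and Psi solve integral equations whose right-hand sides grow at
  most linearly (f is K1-Lipschitz, so norm (fx x u) <= K1), and the mode lasts one time unit;
  Gronwall's inequality therefore multiplies their sizes by at most exp K1 per mode. At a jump,
  g and gx are polynomial in the state and in the observation. By induction on the mode, the
  state and Psi on mode k + 1 are bounded by constants depending only on x0 and the data, times
  the product over m <= k of max 1 (norm (y m)) ^ N_k, where N_k grows with each jump. Since
  max 1 a ^ N = a ^ j for some j in {0, N}, such a product is dominated by the sum over all
  exponent patterns in {0, N} ^ k.\<close>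

section \<open>Gronwall's inequality\<close>

lemma norm_derivative_le_lipschitz:
  fixes F :: "'a::real_normed_vector \<Rightarrow> 'b::real_normed_vector"
  assumes F': "(F has_derivative D) (at x)"
    and lip: "\<And>z. norm (F z - F x) \<le> K * norm (z - x)"
  shows "norm (D h) \<le> K * norm h"
proof -
  define r where "r = (\<lambda>s::real. norm (F (x + s *\<^sub>R h) - F x - s *\<^sub>R D h) / norm s)"
  have "((\<lambda>s. x + s *\<^sub>R h) has_derivative (\<lambda>s. s *\<^sub>R h)) (at 0)"
    by (auto intro!: derivative_eq_intros)
  then have "((\<lambda>s. F (x + s *\<^sub>R h)) has_derivative (\<lambda>s. D (s *\<^sub>R h))) (at 0)"
    using has_derivative_compose[of "\<lambda>s. x + s *\<^sub>R h" _ 0 UNIV F D] F' by simp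
  moreover have "D (s *\<^sub>R h) = s *\<^sub>R D h" for s
    using F' by (simp add: has_derivative_at linear_simps)
  ultimately have "(r \<longlongrightarrow> 0) (at 0)"
    by (simp add: has_derivative_at r_def)
  moreover have "norm (D h) - K * norm h \<le> r s" if "s \<noteq> 0" for s
  proof -
    have "norm (s *\<^sub>R D h) \<le> norm (F (x + s *\<^sub>R h) - F x) + r s * norm s"
      using that norm_triangle_ineq3[of "F (x + s *\<^sub>R h) - F x" "s *\<^sub>R D h"]
      by (simp add: r_def norm_minus_commute)
    also have "\<dots> \<le> K * (\<bar>s\<bar> * norm h) + r s * \<bar>s\<bar>"
      using lip[of "x + s *\<^sub>R h"] by simp
    finally have "\<bar>s\<bar> * norm (D h) \<le> \<bar>s\<bar> * (K * norm h + r s)"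
      by (simp add: algebra_simps)
    then show ?thesis using that by simp
  qed
  ultimately show ?thesis
    using tendsto_lowerbound[of r 0 "at 0" "norm (D h) - K * norm h"]
    by (simp add: eventually_at_filter)
qed

lemma gronwall_inequality:
  fixes u :: "real \<Rightarrow> real"
  assumes u_cont: "continuous_on {a..b} u" and K: "0 \<le> K"
    and u_le: "\<And>s. s \<in> {a..b} \<Longrightarrow> u s \<le> A + K * integral {a..s} u"
    and t: "t \<in> {a..b}"
  shows "u t \<le> A * exp (K * (t - a))"
proof -
  define U where "U = (\<lambda>s. integral {a..s} u)"
  define G where "G s = exp (- K * (s - a)) * (A + K * U s)" for s
  have "continuous_on {a..b} U"
    unfolding U_def by (intro indefinite_integral_continuous_1 integrable_continuous_real u_cont)
  then have G_cont: "continuous_on {a..t} G"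
    unfolding G_def using t by (intro continuous_intros) (auto elim: continuous_on_subset)
  have G_deriv: "\<exists>d. (G has_real_derivative d) (at s) \<and> d \<le> 0" if "a < s" "s < t" for s
  proof -
    have "at s within {a..b} = at s" using that t by (intro at_within_Icc_at) auto
    then have "(U has_real_derivative u s) (at s)"
      using integral_has_real_derivative[OF u_cont, of s] that t by (simp add: U_def)
    then have "(G has_real_derivative exp (- K * (s - a)) * K * (u s - (A + K * U s))) (at s)"
      unfolding G_def by (auto intro!: derivative_eq_intros simp: algebra_simps)
    moreover have "u s \<le> A + K * U s" using u_le[of s] that t by (simp add: U_def)
    ultimately show ?thesis using K by (intro exI) (auto simp: mult_nonneg_nonpos)
  qed
  have "G t \<le> G a"
    using DERIV_nonpos_imp_decreasing_open[of a t G, OF _ G_deriv G_cont] t by simp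
  then have "exp (- K * (t - a)) * (A + K * U t) \<le> A"
    by (simp add: G_def U_def)
  then have "A + K * U t \<le> A * exp (K * (t - a))"
    by (simp add: exp_minus divide_simps mult.commute)
  then show ?thesis using u_le[OF t] by (simp add: U_def)
qed

lemma norm_le_of_has_integral_linear_growth:
  fixes \<phi> h :: "real \<Rightarrow> 'a::banach"
  assumes ab: "a \<le> b" and K: "0 \<le> K" and c: "0 \<le> c"
    and \<phi>_eq: "\<And>t. t \<in> {a..b} \<Longrightarrow> (h has_integral (\<phi> t - \<phi>0)) {a..t}"
    and h_le: "\<And>s. s \<in> {a..b} \<Longrightarrow> norm (h s) \<le> K * norm (\<phi> s) + c"
    and t: "t \<in> {a..b}"
  shows "norm (\<phi> t) \<le> (norm \<phi>0 + c * (b - a)) * exp (K * (t - a))"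
proof -
  have \<phi>_integral: "\<phi> s = \<phi>0 + integral {a..s} h" if "s \<in> {a..b}" for s
    using \<phi>_eq[OF that] by (simp add: integral_unique)
  have "h integrable_on {a..b}"
    using \<phi>_eq[of b] ab by (auto intro: has_integral_integrable)
  then have "continuous_on {a..b} (\<lambda>s. \<phi>0 + integral {a..s} h)"
    by (intro continuous_intros indefinite_integral_continuous_1)
  then have "continuous_on {a..b} \<phi>"
    by (rule continuous_on_eq) (simp add: \<phi>_integral)
  then have \<phi>_cont: "continuous_on {a..b} (\<lambda>s. norm (\<phi> s))"
    by (intro continuous_intros)
  have "norm (\<phi> s) \<le> (norm \<phi>0 + c * (b - a)) + K * integral {a..s} (\<lambda>s. norm (\<phi> s))"
    if s: "s \<in> {a..b}" for s
  proof -
    have norm_\<phi>_int: "(\<lambda>s. norm (\<phi> s)) integrable_on {a..s}"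
      using s by (intro integrable_continuous_interval continuous_on_subset[OF \<phi>_cont]) auto
    have "norm (integral {a..s} h) \<le> integral {a..s} (\<lambda>r. K * norm (\<phi> r) + c)"
      using \<phi>_eq[OF s] norm_\<phi>_int s h_le
      by (intro integral_norm_bound_integral) (auto intro!: integrable_add integrable_on_mult_right)
    also have "\<dots> = K * integral {a..s} (\<lambda>r. norm (\<phi> r)) + c * (s - a)"
      using norm_\<phi>_int s
      by (subst integral_add) (auto intro: integrable_on_mult_right integrable_const_ivl)
    also have "\<dots> \<le> K * integral {a..s} (\<lambda>r. norm (\<phi> r)) + c * (b - a)"
      using s c by (simp add: mult_left_mono)
    finally show ?thesis
      using \<phi>_integral[OF s] norm_triangle_ineq[of \<phi>0 "integral {a..s} h"] by simp
  qed
  then show ?thesis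
    by (rule gronwall_inequality[OF \<phi>_cont K _ t])
qed

corollary norm_le_of_has_integral_linear_growth_unit:
  fixes \<phi> h :: "real \<Rightarrow> 'a::banach"
  assumes ab: "a \<le> b" "b \<le> a + 1" and K: "0 \<le> K" and c: "0 \<le> c"
    and \<phi>_eq: "\<And>t. t \<in> {a..b} \<Longrightarrow> (h has_integral (\<phi> t - \<phi>0)) {a..t}"
    and h_le: "\<And>s. s \<in> {a..b} \<Longrightarrow> norm (h s) \<le> K * norm (\<phi> s) + c"
    and t: "t \<in> {a..b}"
  shows "norm (\<phi> t) \<le> (norm \<phi>0 + c) * exp K"
proof -
  have "norm (\<phi> t) \<le> (norm \<phi>0 + c * (b - a)) * exp (K * (t - a))"
    by (rule norm_le_of_has_integral_linear_growth[OF ab(1) K c \<phi>_eq h_le t])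
  also have "\<dots> \<le> (norm \<phi>0 + c) * exp K"
  proof (rule mult_mono)
    show "norm \<phi>0 + c * (b - a) \<le> norm \<phi>0 + c"
      using ab c mult_left_mono[of "b - a" 1 c] by simp
    show "exp (K * (t - a)) \<le> exp K"
      using t ab K mult_left_mono[of "t - a" 1 K] by simp
  qed (use c in auto)
  finally show ?thesis .
qed

section \<open>Weights of the observations\<close>

definition obs_weight :: "(nat \<Rightarrow> real) \<Rightarrow> nat \<Rightarrow> nat \<Rightarrow> real" where
  "obs_weight a N k = (\<Prod>m=1..k. max 1 (a m) ^ N)"

lemma obs_weight_0 [simp]: "obs_weight a N 0 = 1"
  by (simp add: obs_weight_def)

lemma obs_weight_ge_1: "1 \<le> obs_weight a N k"
  unfolding obs_weight_def by (intro prod_ge_1) (simp add: one_le_power)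

lemma obs_weight_power_mult_le_Suc:
  "obs_weight a N k ^ p * max 1 (a (Suc k)) ^ q \<le> obs_weight a (N * p + q) (Suc k)"
proof -
  have "obs_weight a N k ^ p = (\<Prod>m=1..k. max 1 (a m) ^ (N * p))"
    by (simp add: obs_weight_def prod_power_distrib power_mult)
  also have "\<dots> \<le> obs_weight a (N * p + q) k"
    unfolding obs_weight_def by (intro prod_mono conjI power_increasing) auto
  finally have "obs_weight a N k ^ p * max 1 (a (Suc k)) ^ q
      \<le> obs_weight a (N * p + q) k * max 1 (a (Suc k)) ^ (N * p + q)"
    using obs_weight_ge_1[of a "N * p + q" k] by (intro mult_mono power_increasing) auto
  then show ?thesis
    by (simp add: obs_weight_def)
qed

lemma obs_weight_le_sum:
  assumes a: "\<And>m. 0 \<le> a m" and C: "0 \<le> C"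
  shows "C * obs_weight a N k
    \<le> (\<Sum>js\<in>{js. set js \<subseteq> {0, N} \<and> length js = k}. (C + 1) * (\<Prod>m=1..k. a m ^ (js ! (m - 1))))"
proof -
  define js0 where "js0 = map (\<lambda>m. if 1 \<le> a (Suc m) then N else 0) [0..<k]"
  have js0: "js0 \<in> {js. set js \<subseteq> {0, N} \<and> length js = k}"
    by (auto simp: js0_def)
  have "obs_weight a N k = (\<Prod>m=1..k. a m ^ (js0 ! (m - 1)))"
    unfolding obs_weight_def by (intro prod.cong) (auto simp: js0_def max_def)
  then have "C * obs_weight a N k \<le> (C + 1) * (\<Prod>m=1..k. a m ^ (js0 ! (m - 1)))"
    using obs_weight_ge_1[of a N k] C by (simp add: algebra_simps)
  also have "\<dots> \<le> (\<Sum>js\<in>{js. set js \<subseteq> {0, N} \<and> length js = k}. (C + 1) * (\<Prod>m=1..k. a m ^ (js ! (m - 1))))"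
    using finite_lists_length_eq[of "{0, N}" k] js0 a C
    by (intro member_le_sum) (auto intro!: mult_nonneg_nonneg prod_nonneg)
  finally show ?thesis .
qed

section \<open>Bounds along a hybrid trajectory\<close>

locale lipschitz_hybrid_system =
  fixes f :: "'x::banach \<Rightarrow> 'u::real_normed_vector \<Rightarrow> 'x"
    and fx :: "'x \<Rightarrow> 'u \<Rightarrow> 'x \<Rightarrow>\<^sub>L 'x"
    and g :: "'x \<Rightarrow> 'y::real_normed_vector \<Rightarrow> 'x"
    and gx :: "'x \<Rightarrow> 'y \<Rightarrow> 'x \<Rightarrow>\<^sub>L 'x"
    and \<rho> K1 K2 K3 K4 K5 :: real and L1 L2 :: nat
  assumes rho_nonneg: "0 \<le> \<rho>" and K1_nonneg: "0 \<le> K1"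
    and f_lip: "\<And>x' x'' u' u''. norm u' \<le> \<rho> \<Longrightarrow> norm u'' \<le> \<rho> \<Longrightarrow>
                  norm (f x' u' - f x'' u'') \<le> K1 * (norm (x' - x'') + norm (u' - u''))"
    and fx_deriv: "\<And>x u. ((\<lambda>x'. f x' u) has_derivative blinfun_apply (fx x u)) (at x)"
    and K_nonneg: "0 \<le> K2" "0 \<le> K3" "0 \<le> K4" "0 \<le> K5"
    and g_bound: "\<And>x y. norm (g x y) \<le> K2 + K3 * norm x ^ L1 + K4 * norm y ^ L2
                           + K5 * norm x ^ L1 * norm y ^ L2"
    and gx_bound: "\<And>x y. norm (gx x y) \<le> K2 + K3 * norm x ^ L1 + K4 * norm y ^ L2
                           + K5 * norm x ^ L1 * norm y ^ L2"
begin

definition drift_offset :: real where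
  "drift_offset = norm (f 0 0) + K1 * \<rho>"

lemma drift_offset_nonneg: "0 \<le> drift_offset"
  using K1_nonneg rho_nonneg by (simp add: drift_offset_def)

lemma norm_f_le:
  assumes "norm u \<le> \<rho>"
  shows "norm (f x u) \<le> K1 * norm x + drift_offset"
proof -
  have "norm (f x u) \<le> norm (f 0 0) + K1 * (norm x + norm u)"
    using f_lip[OF assms, of 0 x 0] rho_nonneg norm_triangle_ineq2[of "f x u" "f 0 0"] by simp
  also have "\<dots> \<le> norm (f 0 0) + K1 * (norm x + \<rho>)"
    using assms K1_nonneg by (simp add: mult_left_mono)
  finally show ?thesis
    by (simp add: drift_offset_def algebra_simps)
qed

lemma norm_fx_le:
  assumes "norm u \<le> \<rho>"
  shows "norm (fx x u) \<le> K1"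
  using f_lip[OF assms assms] K1_nonneg
  by (intro norm_blinfun_bound norm_derivative_le_lipschitz[OF fx_deriv]) auto

lemma norm_fx_apply_le:
  assumes "norm u \<le> \<rho>"
  shows "norm (fx x u h) \<le> K1 * norm h"
  using norm_blinfun[of "fx x u" h] norm_fx_le[OF assms] by (meson mult_right_mono norm_ge_zero order_trans)

definition jump_gain :: "real \<Rightarrow> real" where
  "jump_gain D = K2 + K3 * D ^ L1 + K4 + K5 * D ^ L1"

lemma jump_gain_nonneg: "0 \<le> D \<Longrightarrow> 0 \<le> jump_gain D"
  using K_nonneg by (simp add: jump_gain_def)

lemma growth_polynomial_le_jump_gain:
  assumes z: "0 \<le> z" "z \<le> D * P" and D: "0 \<le> D" and P: "1 \<le> P"
    and r: "0 \<le> r" "r \<le> M" and M: "1 \<le> M"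
  shows "K2 + K3 * z ^ L1 + K4 * r ^ L2 + K5 * z ^ L1 * r ^ L2 \<le> jump_gain D * P ^ L1 * M ^ L2"
proof -
  define p q d where "p = P ^ L1" and "q = M ^ L2" and "d = D ^ L1"
  have pq: "1 \<le> p" "1 \<le> q" "1 \<le> p * q" "0 \<le> d"
    using P M D one_le_power[of P L1] one_le_power[of M L2] mult_mono[of 1 p 1 q]
    by (simp_all add: p_def q_def d_def)
  have zd: "z ^ L1 \<le> d * p"
    unfolding d_def p_def power_mult_distrib[symmetric] using z by (intro power_mono) auto
  have rq: "r ^ L2 \<le> q"
    unfolding q_def using r by (intro power_mono) auto
  have "K2 \<le> K2 * (p * q)"
    using K_nonneg pq mult_left_mono[of 1 "p * q" K2] by simp
  moreover have "K3 * z ^ L1 \<le> K3 * (d * (p * q))"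
    using K_nonneg zd pq mult_left_mono[of 1 q "d * p"] by (intro mult_left_mono) (auto simp: ac_simps)
  moreover have "K4 * r ^ L2 \<le> K4 * (p * q)"
    using K_nonneg pq mult_right_mono[of 1 p q] by (intro mult_left_mono order_trans[OF rq]) auto
  moreover have "K5 * (z ^ L1 * r ^ L2) \<le> K5 * (d * p * q)"
    using K_nonneg pq z r by (intro mult_left_mono mult_mono[OF zd rq]) auto
  ultimately show ?thesis
    by (simp add: jump_gain_def p_def q_def d_def algebra_simps)
qed

lemma norm_g_le:
  assumes "norm x \<le> D * P" "0 \<le> D" "1 \<le> P"
  shows "norm (g x y) \<le> jump_gain D * P ^ L1 * max 1 (norm y) ^ L2"
  using assms by (intro order_trans[OF g_bound growth_polynomial_le_jump_gain]) auto

lemma norm_gx_le: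
  assumes "norm x \<le> D * P" "0 \<le> D" "1 \<le> P"
  shows "norm (gx x y) \<le> jump_gain D * P ^ L1 * max 1 (norm y) ^ L2"
  using assms by (intro order_trans[OF gx_bound growth_polynomial_le_jump_gain]) auto

primrec state_bound :: "'x \<Rightarrow> nat \<Rightarrow> real" where
  "state_bound x0 0 = (norm x0 + drift_offset) * exp K1"
| "state_bound x0 (Suc k) = (jump_gain (state_bound x0 k) + drift_offset) * exp K1"

primrec psi_bound :: "'x \<Rightarrow> nat \<Rightarrow> real" where
  "psi_bound x0 0 = 2 * K1 * \<rho> * exp K1"
| "psi_bound x0 (Suc k) = jump_gain (state_bound x0 k) * psi_bound x0 k * exp K1"

text \<open>The factor L1 + 1: the jump of Psi multiplies a bound on gx, of degree L1 in the
  state, by the previous bound on Psi.\<close>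
primrec obs_exponent :: "nat \<Rightarrow> nat" where
  "obs_exponent 0 = 0"
| "obs_exponent (Suc k) = obs_exponent k * (L1 + 1) + L2"

lemma state_bound_nonneg: "0 \<le> state_bound x0 k"
  by (induction k) (simp_all add: drift_offset_nonneg jump_gain_nonneg)

lemma psi_bound_nonneg: "0 \<le> psi_bound x0 k"
  by (induction k) (simp_all add: K1_nonneg rho_nonneg jump_gain_nonneg state_bound_nonneg)

context
  fixes T :: nat and x0 :: 'x and y :: "nat \<Rightarrow> 'y" and v :: 'u and \<tau> \<epsilon> :: real
    and w :: "real \<Rightarrow> 'u" and xs Ps :: "nat \<Rightarrow> real \<Rightarrow> 'x"
  assumes traj: "hybrid_traj T f g x0 y w xs"
    and psi: "psi_sys T f fx gx y v \<tau> \<epsilon> w xs Ps"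
    and w_bound: "\<And>s. s \<in> {0..real T} \<Longrightarrow> norm (w s) \<le> \<rho>"
    and v_bound: "norm v \<le> \<rho>"
    and needle_start: "0 \<le> \<tau> - \<epsilon>" "\<tau> - \<epsilon> \<le> 1"
begin

abbreviation weight :: "nat \<Rightarrow> real" where
  "weight k \<equiv> obs_weight (\<lambda>m. norm (y m)) (obs_exponent k) k"

lemma mode_state_le:
  assumes i: "i \<in> {1..T}" and t: "t \<in> {real i - 1..real i}"
  shows "norm (xs i t)
    \<le> (norm (if i = 1 then x0 else g (xs (i - 1) (real i - 1)) (y (i - 1))) + drift_offset) * exp K1"
proof (rule norm_le_of_has_integral_linear_growth_unit
    [where \<phi> = "xs i" and h = "\<lambda>s. f (xs i s) (w s)", OF _ _ K1_nonneg drift_offset_nonneg _ _ t])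
  show "((\<lambda>s. f (xs i s) (w s)) has_integral
      (xs i t' - (if i = 1 then x0 else g (xs (i - 1) (real i - 1)) (y (i - 1))))) {real i - 1..t'}"
    if "t' \<in> {real i - 1..real i}" for t'
    using traj i that unfolding hybrid_traj_def by blast
  show "norm (f (xs i s) (w s)) \<le> K1 * norm (xs i s) + drift_offset"
    if "s \<in> {real i - 1..real i}" for s
    using i that by (intro norm_f_le w_bound) auto
qed auto

lemma mode_psi_le:
  assumes i: "i \<in> {2..T}" and t: "t \<in> {real i - 1..real i}"
  shows "norm (Ps i t) \<le> norm (gx (xs (i - 1) (real i - 1)) (y (i - 1)) (Ps (i - 1) (real i - 1))) * exp K1"
proof -
  have "norm (Ps i t) \<le> (norm (gx (xs (i - 1) (real i - 1)) (y (i - 1)) (Ps (i - 1) (real i - 1))) + 0) * exp K1"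
  proof (rule norm_le_of_has_integral_linear_growth_unit
      [where \<phi> = "Ps i" and h = "\<lambda>s. fx (xs i s) (w s) (Ps i s)", OF _ _ K1_nonneg order_refl _ _ t])
    show "((\<lambda>s. fx (xs i s) (w s) (Ps i s)) has_integral
        (Ps i t' - gx (xs (i - 1) (real i - 1)) (y (i - 1)) (Ps (i - 1) (real i - 1)))) {real i - 1..t'}"
      if "t' \<in> {real i - 1..real i}" for t'
      using psi i that unfolding psi_sys_def by blast
    show "norm (fx (xs i s) (w s) (Ps i s)) \<le> K1 * norm (Ps i s) + 0"
      if "s \<in> {real i - 1..real i}" for s
      using i that by (simp add: norm_fx_apply_le w_bound)
  qed auto
  then show ?thesis by simp
qed

lemma first_psi_le:
  assumes "1 \<le> T"
  shows "norm (Ps 1 1) \<le> psi_bound x0 0"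
proof -
  define a where "a = \<tau> - \<epsilon>"
  have a: "0 \<le> a" "a \<le> 1"
    using needle_start by (simp_all add: a_def)
  have w_le: "norm (w s) \<le> \<rho>" if "s \<in> {a..1}" for s
    using a that assms by (intro w_bound) auto
  have "norm (Ps 1 1) \<le> (norm (f (xs 1 a) v - f (xs 1 a) (w a)) + 0) * exp K1"
  proof (rule norm_le_of_has_integral_linear_growth_unit
      [where \<phi> = "Ps 1" and h = "\<lambda>s. fx (xs 1 s) (w s) (Ps 1 s)", OF _ _ K1_nonneg order_refl])
    show "((\<lambda>s. fx (xs 1 s) (w s) (Ps 1 s)) has_integral
        (Ps 1 t - (f (xs 1 a) v - f (xs 1 a) (w a)))) {a..t}" if "t \<in> {a..1}" for t
      using psi that unfolding psi_sys_def a_def by blast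
    show "norm (fx (xs 1 s) (w s) (Ps 1 s)) \<le> K1 * norm (Ps 1 s) + 0" if "s \<in> {a..1}" for s
      using that by (simp add: norm_fx_apply_le w_le)
  qed (use a in auto)
  also have "\<dots> \<le> K1 * (2 * \<rho>) * exp K1"
  proof -
    have "norm (f (xs 1 a) v - f (xs 1 a) (w a)) \<le> K1 * norm (v - w a)"
      using f_lip[OF v_bound w_le[of a], of "xs 1 a" "xs 1 a"] a by simp
    also have "\<dots> \<le> K1 * (2 * \<rho>)"
      using norm_triangle_ineq4[of v "w a"] v_bound w_le[of a] a K1_nonneg
      by (intro mult_left_mono) auto
    finally show ?thesis by simp
  qed
  finally show ?thesis by simp
qed

lemma next_mode_bounds:
  assumes k: "Suc (Suc k) \<le> T"
    and x_le: "norm (xs (Suc k) (real (Suc k))) \<le> state_bound x0 k * weight k"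
    and Ps_le: "norm (Ps (Suc k) (real (Suc k))) \<le> psi_bound x0 k * weight k"
    and t: "t \<in> {real (Suc k)..real (Suc (Suc k))}"
  shows "norm (xs (Suc (Suc k)) t) \<le> state_bound x0 (Suc k) * weight (Suc k)"
    and "norm (Ps (Suc (Suc k)) t) \<le> psi_bound x0 (Suc k) * weight (Suc k)"
proof -
  define P Q M E where "P = weight k" and "Q = weight (Suc k)"
    and "M = max 1 (norm (y (Suc k)))" and "E = jump_gain (state_bound x0 k)"
  have P: "1 \<le> P" and Q: "1 \<le> Q" and E: "0 \<le> E"
    by (simp_all add: P_def Q_def E_def obs_weight_ge_1 jump_gain_nonneg state_bound_nonneg)
  have PQ: "P ^ (L1 + 1) * M ^ L2 \<le> Q"
    using obs_weight_power_mult_le_Suc[of "\<lambda>m. norm (y m)" "obs_exponent k" k "L1 + 1" L2]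
    by (simp add: P_def Q_def M_def)
  have "P ^ L1 * M ^ L2 \<le> P ^ (L1 + 1) * M ^ L2"
    using P by (intro mult_right_mono power_increasing) (auto simp: M_def)
  with PQ have PQ': "P ^ L1 * M ^ L2 \<le> Q" by linarith
  have i: "Suc (Suc k) \<in> {1..T}" "Suc (Suc k) \<in> {2..T}"
    using k by auto
  have t': "t \<in> {real (Suc (Suc k)) - 1..real (Suc (Suc k))}"
    using t by simp
  have "norm (g (xs (Suc k) (real (Suc k))) (y (Suc k))) \<le> E * (P ^ L1 * M ^ L2)"
    using norm_g_le[OF x_le[folded P_def] state_bound_nonneg P] by (simp add: E_def M_def mult.assoc)
  also have "\<dots> \<le> E * Q"
    using PQ' E by (rule mult_left_mono)
  finally have x_jump: "norm (g (xs (Suc k) (real (Suc k))) (y (Suc k))) \<le> E * Q" .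
  have "norm (xs (Suc (Suc k)) t) \<le> (norm (g (xs (Suc k) (real (Suc k))) (y (Suc k))) + drift_offset) * exp K1"
    using mode_state_le[OF i(1) t'] by simp
  also have "\<dots> \<le> (E * Q + drift_offset) * exp K1"
    using x_jump by (intro mult_right_mono) auto
  also have "\<dots> \<le> (E + drift_offset) * exp K1 * Q"
    using Q drift_offset_nonneg mult_left_mono[of 1 Q drift_offset] by (simp add: algebra_simps)
  finally show "norm (xs (Suc (Suc k)) t) \<le> state_bound x0 (Suc k) * weight (Suc k)"
    by (simp add: E_def Q_def)
  have "norm (gx (xs (Suc k) (real (Suc k))) (y (Suc k)) (Ps (Suc k) (real (Suc k))))
      \<le> norm (gx (xs (Suc k) (real (Suc k))) (y (Suc k))) * norm (Ps (Suc k) (real (Suc k)))"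
    by (rule norm_blinfun)
  also have "\<dots> \<le> (E * P ^ L1 * M ^ L2) * (psi_bound x0 k * P)"
    using norm_gx_le[OF x_le[folded P_def] state_bound_nonneg P] Ps_le[folded P_def] E P
    by (intro mult_mono) (auto simp: E_def M_def)
  also have "\<dots> = E * psi_bound x0 k * (P ^ (L1 + 1) * M ^ L2)"
    by (simp add: algebra_simps)
  also have "\<dots> \<le> E * psi_bound x0 k * Q"
    using PQ E psi_bound_nonneg by (intro mult_left_mono) auto
  finally have "norm (Ps (Suc (Suc k)) t) \<le> E * psi_bound x0 k * Q * exp K1"
    using mode_psi_le[OF i(2) t'] by (simp add: order_trans)
  then show "norm (Ps (Suc (Suc k)) t) \<le> psi_bound x0 (Suc k) * weight (Suc k)"
    by (simp add: E_def Q_def algebra_simps)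
qed

lemma endpoint_bounds:
  assumes "Suc k \<le> T"
  shows "norm (xs (Suc k) (real (Suc k))) \<le> state_bound x0 k * weight k
    \<and> norm (Ps (Suc k) (real (Suc k))) \<le> psi_bound x0 k * weight k"
  using assms
proof (induction k)
  case 0
  then show ?case
    using mode_state_le[of 1 1] first_psi_le by simp
next
  case (Suc k)
  then show ?case
    using next_mode_bounds[of k "real (Suc (Suc k))"] by simp
qed

lemma psi_mode_le:
  assumes i: "i \<in> {2..T}" and t: "t \<in> {real i - 1..real i}"
  shows "norm (Ps i t) \<le> psi_bound x0 (i - 1) * weight (i - 1)"
proof -
  obtain k where k: "i = Suc (Suc k)"
    using i by (metis atLeastAtMost_iff add_2_eq_Suc le_Suc_ex)
  show ?thesis
    using i t endpoint_bounds[of k] next_mode_bounds(2)[of k t] unfolding k by simp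
qed

end

end

theorem proposition10:
  fixes T L1 L2 :: nat
    and \<rho>max K1 K2 K3 K4 K5 \<tau> :: real
    and f :: "real^'nx \<Rightarrow> real^'m \<Rightarrow> real^'nx"
    and fx :: "real^'nx \<Rightarrow> real^'m \<Rightarrow> (real^'nx) \<Rightarrow>\<^sub>L (real^'nx)"
    and g :: "real^'nx \<Rightarrow> real^'ny \<Rightarrow> real^'nx"
    and gx :: "real^'nx \<Rightarrow> real^'ny \<Rightarrow> (real^'nx) \<Rightarrow>\<^sub>L (real^'nx)"
    and x0 :: "real^'nx" and v :: "real^'m"
  assumes T_pos: "T \<ge> 1"
    and rho_pos: "\<rho>max > 0"
    and f_C1: "\<exists>Df :: (real^'nx) \<times> (real^'m) \<Rightarrow> ((real^'nx) \<times> (real^'m)) \<Rightarrow>\<^sub>L (real^'nx).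
                 continuous_on UNIV Df \<and>
                 (\<forall>p. ((\<lambda>q. f (fst q) (snd q)) has_derivative blinfun_apply (Df p)) (at p))"
    and fx_deriv: "\<And>x u. ((\<lambda>x'. f x' u) has_derivative blinfun_apply (fx x u)) (at x)"
    and K1: "K1 \<ge> 1"
    and f_lip: "\<And>x' x'' u' u''. norm u' \<le> \<rho>max \<Longrightarrow> norm u'' \<le> \<rho>max \<Longrightarrow>
                 norm (f x' u' - f x'' u'') \<le> K1 * (norm (x' - x'') + norm (u' - u''))"
    and g_cont: "continuous_on UNIV (\<lambda>p. g (fst p) (snd p))"
    and gx_deriv: "\<And>x y. ((\<lambda>x'. g x' y) has_derivative blinfun_apply (gx x y)) (at x)"
    and K_nonneg: "K2 \<ge> 0" "K3 \<ge> 0" "K4 \<ge> 0" "K5 \<ge> 0"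
    and L_pos: "L1 \<ge> 1" "L2 \<ge> 1"
    and g_bound: "\<And>x y. norm (g x y) \<le> K2 + K3 * norm x ^ L1 + K4 * norm y ^ L2
                           + K5 * norm x ^ L1 * norm y ^ L2"
    and gx_bound: "\<And>x y. norm (gx x y) \<le> K2 + K3 * norm x ^ L1 + K4 * norm y ^ L2
                           + K5 * norm x ^ L1 * norm y ^ L2"
    and tau: "0 < \<tau>" "\<tau> < 1"
    and v_ball: "norm v \<le> \<rho>max"
  shows "\<exists>(\<L> :: nat \<Rightarrow> nat list set) (\<beta> :: nat \<Rightarrow> nat list \<Rightarrow> real).
           (\<forall>i\<in>{2..T}. finite (\<L> i) \<and> (\<forall>js\<in>\<L> i. length js = i - 1 \<and> \<beta> i js > 0)) \<and>
           (\<forall>(u :: real \<Rightarrow> real^'m) (y :: nat \<Rightarrow> real^'ny) \<epsilon> xs Ps.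
              admissible T \<rho>max u \<longrightarrow> continuous (at_left \<tau>) u \<longrightarrow>
              0 \<le> \<epsilon> \<longrightarrow> \<epsilon> < \<tau> \<longrightarrow>
              hybrid_traj T f g x0 y (pert_ctrl u v \<tau> \<epsilon>) xs \<longrightarrow>
              psi_sys T f fx gx y v \<tau> \<epsilon> (pert_ctrl u v \<tau> \<epsilon>) xs Ps \<longrightarrow>
              (\<forall>i\<in>{2..T}. \<forall>t\<in>{real i - 1..real i}.
                 norm (Ps i t) \<le> (\<Sum>js\<in>\<L> i. \<beta> i js * (\<Prod>m=1..i - 1. norm (y m) ^ (js ! (m - 1))))))"
proof -
  interpret lipschitz_hybrid_system f fx g gx \<rho>max K1 K2 K3 K4 K5 L1 L2
    using rho_pos K1 f_lip fx_deriv K_nonneg g_bound gx_bound by unfold_locales auto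
  define \<L> where "\<L> i = {js. set js \<subseteq> {0, obs_exponent (i - 1)} \<and> length js = i - 1}" for i
  define \<beta> where "\<beta> i js = psi_bound x0 (i - 1) + 1" for i and js :: "nat list"
  have "finite (\<L> i) \<and> (\<forall>js\<in>\<L> i. length js = i - 1 \<and> \<beta> i js > 0)" for i
    using finite_lists_length_eq[of "{0, obs_exponent (i - 1)}" "i - 1"] psi_bound_nonneg[of x0 "i - 1"]
    by (auto simp: \<L>_def \<beta>_def)
  moreover have "norm (Ps i t) \<le> (\<Sum>js\<in>\<L> i. \<beta> i js * (\<Prod>m=1..i - 1. norm (y m) ^ (js ! (m - 1))))"
    if u: "admissible T \<rho>max u" and \<epsilon>: "0 \<le> \<epsilon>" "\<epsilon> < \<tau>"
      and traj: "hybrid_traj T f g x0 y (pert_ctrl u v \<tau> \<epsilon>) xs"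
      and psi: "psi_sys T f fx gx y v \<tau> \<epsilon> (pert_ctrl u v \<tau> \<epsilon>) xs Ps"
      and i: "i \<in> {2..T}" and t: "t \<in> {real i - 1..real i}"
    for u :: "real \<Rightarrow> real^'m" and y :: "nat \<Rightarrow> real^'ny" and \<epsilon> xs Ps i t
  proof -
    have "norm (pert_ctrl u v \<tau> \<epsilon> s) \<le> \<rho>max" if "s \<in> {0..real T}" for s
      using u that v_ball by (auto simp: pert_ctrl_def admissible_def)
    then have "norm (Ps i t) \<le> psi_bound x0 (i - 1) * obs_weight (\<lambda>m. norm (y m)) (obs_exponent (i - 1)) (i - 1)"
      using psi_mode_le[OF traj psi _ v_ball _ _ i t] \<epsilon> tau by simp
    also have "\<dots> \<le> (\<Sum>js\<in>\<L> i. \<beta> i js * (\<Prod>m=1..i - 1. norm (y m) ^ (js ! (m - 1))))"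
      unfolding \<L>_def \<beta>_def by (intro obs_weight_le_sum psi_bound_nonneg norm_ge_zero)
    finally show ?thesis .
  qed
  ultimately show ?thesis
    by (intro exI[of _ \<L>] exI[of _ \<beta>]) blast
qed

end
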